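(* Let $k\in\mathbb{N}$ and let $p$ be a positive integer. Let $C(m)=\binom{2m}{m+k}=\frac{\Gamma(2m+1)}{\Gamma(m+k+1)\Gamma(m-k+1)}$, which is analytic in $m$ near $m=0$. Then $$C^{(p)}(0)=\frac{(-1)^{p+k}}{k}\,p\,B_{p-1}(\overline{\xi}_1,\overline{\xi}_2,\dots,\overline{\xi}_{p-1}),$$ where for $j\ge1$ $$\overline{\xi}_j=(-2)^j\psi^{(j-1)}(1)+2\,[j\text{ odd}]\,\psi^{(j-1)}(k)-2\,[j\text{ even}]\,\psi^{(j-1)}(1)+\frac{(j-1)!}{k^j}.$$
   Context: $1/\Gamma$ is entire. $\psi^{(n)}(z)=\frac{d^{n+1}}{dz^{n+1}}\log\Gamma(z)$ is the polygamma function ($\psi^{(0)}=\psi$ the digamma function). $[\,\cdot\,]$ is $1$ if the condition holds and $0$ otherwise. $B_n(s_1,\dots,s_n)$ denotes the complete Bell polynomial, defined by $\exp\big(\sum_{j\ge1}s_j t^j/j!\big)=\sum_{n\ge0}B_n(s_1,\dots,s_n)t^n/n!$; in particular $B_0=1$. *)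

theory Defs
  imports "HOL-Analysis.Analysis" "HOL-Computational_Algebra.Formal_Power_Series"
begin

text \<open>Complete Bell polynomial B_n(s_1,...,s_n), defined through the exponential
generating function exp(sum_{j>=1} s_j t^j / j!) = sum_n B_n t^n / n!.
Only s_1,...,s_n are used.\<close>
definition complete_bell :: "nat \<Rightarrow> (nat \<Rightarrow> real) \<Rightarrow> real" where
  "complete_bell n s =
     fact n * fps_nth (fps_exp 1 oo Abs_fps (\<lambda>j. if 1 \<le> j \<and> j \<le> n then s j / fact j else 0)) n"

text \<open>C(m) = Gamma(2m+1) / (Gamma(m+k+1) Gamma(m-k+1)), with 1/Gamma = rGamma entire.\<close>
definition binomC :: "nat \<Rightarrow> real \<Rightarrow> real" where
  "binomC k m = Gamma (2*m + 1) * rGamma (m + real k + 1) * rGamma (m - real k + 1)"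

definition xibar :: "nat \<Rightarrow> nat \<Rightarrow> real" where
  "xibar k j = (-2)^j * Polygamma (j-1) 1
      + 2 * (if odd j then 1 else 0) * Polygamma (j-1) (real k)
      - 2 * (if even j then 1 else 0) * Polygamma (j-1) 1
      + fact (j-1) / real k ^ j"

end

theory Submission
  imports Defs "HOL-Complex_Analysis.Complex_Analysis"
begin

text \<open>
  Because \<open>1/\<Gamma>(m - k + 1)\<close> has a simple zero at \<open>m = 0\<close>, Pochhammer identities give
  \<open>C(m) = m Q(-m)\<close> with \<open>Q\<close> a product of Gamma factors that is holomorphic near \<open>0\<close> and
  \<open>Q(0) = (-1)^(k-1)/k\<close>; hence \<open>C^(p)(0) = p (-1)^(p-1) Q^(p-1)(0)\<close>. The logarithmic derivative
  \<open>H = Q'/Q\<close> is a combination of digamma functions with \<open>H^(j-1)(0) = \<xi>_j\<close>, and differentiating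
  \<open>Q' = H Q\<close> repeatedly with Leibniz's rule reproduces the recurrence of the complete Bell
  polynomials, so \<open>Q^(n)(0) = Q(0) B_n(\<xi>_1, ..., \<xi>_n)\<close>.
\<close>

text \<open>Separating the truncation point \<open>N\<close> from the index lets the recurrence be proved for a
  fixed series; \<open>bell_coeff_truncation_irrelevant\<close> then removes \<open>N\<close> again.\<close>

definition bell_series :: "nat \<Rightarrow> (nat \<Rightarrow> real) \<Rightarrow> real fps" where
  "bell_series N s = Abs_fps (\<lambda>j. if 1 \<le> j \<and> j \<le> N then s j / fact j else 0)"

definition bell_coeff :: "nat \<Rightarrow> (nat \<Rightarrow> real) \<Rightarrow> nat \<Rightarrow> real" where
  "bell_coeff N s m = fact m * fps_nth (fps_exp 1 oo bell_series N s) m"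

lemma complete_bell_eq_bell_coeff: "complete_bell n s = bell_coeff n s n"
  by (simp add: complete_bell_def bell_coeff_def bell_series_def)

lemma bell_coeff_0: "bell_coeff N s 0 = 1"
  by (simp add: bell_coeff_def bell_series_def)

lemma bell_coeff_Suc:
  "bell_coeff N s (Suc m) =
     (\<Sum>i=0..m. real (m choose i) * (if Suc i \<le> N then s (Suc i) else 0) * bell_coeff N s (m - i))"
proof -
  let ?A = "bell_series N s"
  let ?E = "fps_exp 1 oo ?A"
  have "fps_deriv ?E = fps_deriv ?A * ?E"
    by (subst fps_compose_deriv) (simp_all add: bell_series_def mult.commute)
  then have "fps_nth (fps_deriv ?E) m = fps_nth (fps_deriv ?A * ?E) m"
    by simp
  then have "fact m * (real (Suc m) * fps_nth ?E (Suc m)) =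
      (\<Sum>i=0..m. fact m * (real (Suc i) * fps_nth ?A (Suc i) * fps_nth ?E (m - i)))"
    by (simp add: fps_mult_nth sum_distrib_left)
  also have "\<dots> = (\<Sum>i=0..m. real (m choose i) * (if Suc i \<le> N then s (Suc i) else 0)
                              * bell_coeff N s (m - i))"
  proof (rule sum.cong[OF refl])
    fix i assume "i \<in> {0..m}"
    then have "fact m = real (m choose i) * fact i * fact (m - i)"
      using binomial_fact[of i m, where 'a=real] by (simp add: field_simps)
    moreover have "fact (Suc i) = real (Suc i) * (fact i :: real)"
      by simp
    ultimately show "fact m * (real (Suc i) * fps_nth ?A (Suc i) * fps_nth ?E (m - i)) =
        real (m choose i) * (if Suc i \<le> N then s (Suc i) else 0) * bell_coeff N s (m - i)"
      by (simp add: bell_series_def bell_coeff_def del: of_nat_Suc)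
  qed
  finally show ?thesis
    by (simp add: bell_coeff_def algebra_simps)
qed

lemma bell_coeff_truncation_irrelevant:
  "m \<le> N \<Longrightarrow> m \<le> M \<Longrightarrow> bell_coeff N s m = bell_coeff M s m"
proof (induction m arbitrary: N M rule: less_induct)
  case (less m)
  show ?case
  proof (cases m)
    case 0
    then show ?thesis by (simp add: bell_coeff_0)
  next
    case (Suc n)
    show ?thesis
      unfolding Suc bell_coeff_Suc by (rule sum.cong[OF refl]) (use less Suc in auto)
  qed
qed

lemma complete_bell_0: "complete_bell 0 s = 1"
  by (simp add: complete_bell_eq_bell_coeff bell_coeff_0)

lemma complete_bell_Suc:
  "complete_bell (Suc n) s = (\<Sum>i=0..n. real (n choose i) * s (Suc i) * complete_bell (n - i) s)"
  unfolding complete_bell_eq_bell_coeff bell_coeff_Suc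
  by (rule sum.cong[OF refl]) (auto intro: bell_coeff_truncation_irrelevant)

lemma higher_deriv_eq_complete_bell:
  fixes F h :: "complex \<Rightarrow> complex" and s :: "nat \<Rightarrow> real"
  assumes F: "F holomorphic_on S" and h: "h holomorphic_on S" and S: "open S" and z: "z \<in> S"
    and logderiv: "\<And>w. w \<in> S \<Longrightarrow> deriv F w = h w * F w"
    and h_derivs: "\<And>j. (deriv ^^ j) h z = of_real (s (Suc j))"
  shows "(deriv ^^ n) F z = F z * of_real (complete_bell n s)"
proof (induction n rule: less_induct)
  case (less n)
  show ?case
  proof (cases n)
    case 0
    then show ?thesis by (simp add: complete_bell_0)
  next
    case (Suc m)
    have "(deriv ^^ n) F z = (deriv ^^ m) (deriv F) z"
      unfolding Suc by (simp add: funpow_Suc_right del: funpow.simps)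
    also have "\<dots> = (deriv ^^ m) (\<lambda>w. h w * F w) z"
      by (rule higher_deriv_transform_within_open[OF _ _ S z])
         (auto intro!: holomorphic_intros F h S logderiv holomorphic_deriv)
    also have "\<dots> = (\<Sum>i = 0..m. of_nat (m choose i) * (deriv ^^ i) h z * (deriv ^^ (m-i)) F z)"
      by (rule higher_deriv_mult[OF h F S z])
    also have "\<dots> = F z * of_real (complete_bell n s)"
      unfolding Suc complete_bell_Suc of_real_sum sum_distrib_left
      by (rule sum.cong[OF refl]) (use less Suc h_derivs in \<open>simp add: algebra_simps\<close>)
    finally show ?thesis .
  qed
qed

lemma higher_deriv_real_eq_Re_higher_deriv:
  fixes f :: "real \<Rightarrow> real" and F :: "complex \<Rightarrow> complex"
  assumes F: "F holomorphic_on S" and S: "open S"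
    and extends: "\<And>x. complex_of_real x \<in> S \<Longrightarrow> F (of_real x) = of_real (f x)"
  shows "complex_of_real x \<in> S \<Longrightarrow> (deriv ^^ n) f x = Re ((deriv ^^ n) F (of_real x))"
proof (induction n arbitrary: x)
  case 0
  then show ?case by (simp add: extends)
next
  case (Suc n x)
  define U where "U = complex_of_real -` S"
  have U: "open U"
    unfolding U_def by (rule open_vimage[OF S]) (intro continuous_intros)
  have "((deriv ^^ n) F has_field_derivative (deriv ^^ Suc n) F (of_real x)) (at (of_real x))"
    by (rule has_field_derivative_higher_deriv[OF F S Suc.prems])
  then have "((\<lambda>y. (deriv ^^ n) F (of_real y)) has_vector_derivative
               (deriv ^^ Suc n) F (of_real x)) (at x)"
    by (rule has_vector_derivative_real_field)
  then have "((\<lambda>y. Re ((deriv ^^ n) F (of_real y))) has_field_derivative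
               Re ((deriv ^^ Suc n) F (of_real x))) (at x)"
    unfolding has_real_derivative_iff_has_vector_derivative
    by (rule bounded_linear.has_vector_derivative[OF bounded_linear_Re])
  then have "((deriv ^^ n) f has_field_derivative Re ((deriv ^^ Suc n) F (of_real x))) (at x)"
    by (rule has_field_derivative_transform_within_open[OF _ U])
       (use Suc in \<open>auto simp: U_def\<close>)
  then show ?case
    by (simp add: DERIV_imp_deriv)
qed

lemma higher_deriv_times_ident_0:
  fixes f :: "complex \<Rightarrow> complex"
  assumes "f holomorphic_on S" "open S" "0 \<in> S"
  shows "(deriv ^^ Suc n) (\<lambda>w. w * f w) 0 = of_nat (Suc n) * (deriv ^^ n) f 0"
proof -
  have "(deriv ^^ Suc n) (\<lambda>w. w * f w) 0 =
          (\<Sum>i = 0..Suc n. of_nat (Suc n choose i) * (deriv ^^ i) (\<lambda>w. w) 0 * (deriv ^^ (Suc n - i)) f 0)"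
    by (rule higher_deriv_mult[OF _ assms]) (intro holomorphic_intros)
  also have "\<dots> = (\<Sum>i = 0..Suc n. if i = 1 then of_nat (Suc n) * (deriv ^^ n) f 0 else 0)"
    by (rule sum.cong[OF refl]) auto
  finally show ?thesis
    by simp
qed

lemma Re_affine_pos:
  fixes u w c :: complex
  assumes "norm w < 1/2" "norm u \<le> 2" "Re c \<ge> 1"
  shows "Re (u * w + c) > 0"
proof -
  have "norm u * norm w \<le> 2 * norm w"
    using assms(2) by (rule mult_right_mono) simp
  then have "norm (u * w) < 1"
    using assms(1) by (simp add: norm_mult)
  then show ?thesis
    using abs_Re_le_cmod[of "u * w"] assms(3) by simp
qed

lemma affine_not_nonpos_Ints:
  fixes u w c :: complex
  assumes "w \<in> ball 0 (1/2)" "norm u \<le> 2" "Re c \<ge> 1"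
  shows "u * w + c \<notin> \<int>\<^sub>\<le>\<^sub>0"
proof
  assume "u * w + c \<in> \<int>\<^sub>\<le>\<^sub>0"
  then obtain n :: nat where "u * w + c = - of_nat n"
    by (auto elim!: nonpos_Ints_cases')
  then have "Re (u * w + c) \<le> 0"
    by simp
  with Re_affine_pos[of w u c] assms show False
    by simp
qed

lemma higher_deriv_Digamma_affine_0:
  fixes u c :: complex
  assumes "norm u \<le> 2" "Re c \<ge> 1"
  shows "(deriv ^^ j) (\<lambda>w. Digamma (u * w + c)) 0 = u ^ j * Polygamma j c"
proof -
  have "Polygamma 0 holomorphic_on {z. Re z > 0}"
    by (rule holomorphic_on_Polygamma) (auto elim!: nonpos_Ints_cases')
  then have "(deriv ^^ j) (\<lambda>w. Digamma (u * w + c)) 0 = u ^ j * (deriv ^^ j) (Polygamma 0) c"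
    using higher_deriv_compose_linear'[of "Polygamma 0" _ "ball 0 (1/2)" 0 u c j]
    using Re_affine_pos assms by (simp add: open_halfspace_Re_gt)
  also have "\<dots> = u ^ j * Polygamma j c"
    using affine_not_nonpos_Ints[of 0 0 c] assms by (simp add: higher_deriv_Polygamma)
  finally show ?thesis .
qed

definition binomC_complex :: "nat \<Rightarrow> complex \<Rightarrow> complex" where
  "binomC_complex k m = Gamma (2*m + 1) * rGamma (m + of_nat k + 1) * rGamma (m - of_nat k + 1)"

text \<open>All Gamma arguments are written as \<open>u * w + c\<close>, the shape expected by
  \<open>affine_not_nonpos_Ints\<close>.\<close>

definition binomC_cofactor :: "nat \<Rightarrow> complex \<Rightarrow> complex" where
  "binomC_cofactor k w = (-1)^(k-1) * Gamma ((-2)*w + 1) * rGamma ((-1)*w + (of_nat k + 1))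
      * Gamma (1*w + of_nat k) * rGamma (1*w + 1) * rGamma ((-1)*w + 1)"

definition binomC_cofactor_logderiv :: "nat \<Rightarrow> complex \<Rightarrow> complex" where
  "binomC_cofactor_logderiv k w = (-2) * Digamma ((-2)*w + 1) + Digamma ((-1)*w + (of_nat k + 1))
      + Digamma (1*w + of_nat k) - Digamma (1*w + 1) + Digamma ((-1)*w + 1)"

lemma binomC_complex_of_real: "binomC_complex k (of_real x) = of_real (binomC k x)"
proof -
  have "complex_of_real (binomC k x) = Gamma (of_real (2*x + 1))
          * rGamma (of_real (x + real k + 1)) * rGamma (of_real (x - real k + 1))"
    unfolding binomC_def Gamma_complex_of_real rGamma_complex_of_real by simp
  then show ?thesis
    by (simp add: binomC_complex_def)
qed

lemma holomorphic_binomC_complex: "binomC_complex k holomorphic_on ball 0 (1/2)"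
  unfolding binomC_complex_def
  by (intro analytic_imp_holomorphic analytic_intros ballI affine_not_nonpos_Ints) auto

lemma holomorphic_binomC_cofactor:
  "k \<ge> 1 \<Longrightarrow> binomC_cofactor k holomorphic_on ball 0 (1/2)"
  unfolding binomC_cofactor_def
  by (intro analytic_imp_holomorphic analytic_intros ballI affine_not_nonpos_Ints) auto

lemma holomorphic_binomC_cofactor_logderiv:
  "k \<ge> 1 \<Longrightarrow> binomC_cofactor_logderiv k holomorphic_on ball 0 (1/2)"
  unfolding binomC_cofactor_logderiv_def
  by (intro analytic_imp_holomorphic analytic_intros ballI affine_not_nonpos_Ints) auto

lemma Gamma_times_rGamma: "z \<notin> \<int>\<^sub>\<le>\<^sub>0 \<Longrightarrow> Gamma z * rGamma z = 1"
  by (simp add: Gamma_def rGamma_eq_zero_iff)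

lemma binomC_complex_eq_times_cofactor:
  assumes k: "k \<ge> 1" and m: "m \<in> ball 0 (1/2)"
  shows "binomC_complex k m = m * binomC_cofactor k (-m)"
proof -
  obtain k' where k': "k = Suc k'"
    using k by (cases k) auto
  have "rGamma (m - of_nat k + 1) = pochhammer (m - of_nat k + 1) k * rGamma (m + 1)"
    using pochhammer_rGamma[of "m - of_nat k + 1" k] by simp
  also have "pochhammer (m - of_nat k + 1) k = pochhammer (m - of_nat k') k' * m"
    unfolding k' by (simp add: pochhammer_Suc algebra_simps)
  also have "pochhammer (m - of_nat k') k' = (-1)^k' * pochhammer (1 - m) k'"
    using pochhammer_minus[of "of_nat k' - m" k'] by (simp add: algebra_simps)
  also have "pochhammer (1 - m) k' = rGamma (1 - m) * Gamma (1 - m + of_nat k')"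
  proof -
    have "(-1) * m + of_nat k \<notin> \<int>\<^sub>\<le>\<^sub>0"
      by (rule affine_not_nonpos_Ints) (use m k in auto)
    with m have "Gamma (1 - m + of_nat k') * rGamma (1 - m + of_nat k') = 1"
      by (intro Gamma_times_rGamma) (simp add: k' algebra_simps)
    moreover have "rGamma (1 - m) = pochhammer (1 - m) k' * rGamma (1 - m + of_nat k')"
      by (rule pochhammer_rGamma)
    ultimately show ?thesis
      by (simp add: algebra_simps)
  qed
  finally show ?thesis
    unfolding binomC_complex_def binomC_cofactor_def by (simp add: k' algebra_simps)
qed

lemma deriv_binomC_cofactor:
  assumes k: "k \<ge> 1" and w: "w \<in> ball 0 (1/2)"
  shows "deriv (binomC_cofactor k) w = binomC_cofactor_logderiv k w * binomC_cofactor k w"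
proof -
  have args: "(-2) * w + 1 \<notin> \<int>\<^sub>\<le>\<^sub>0" "(-1) * w + (of_nat k + 1) \<notin> \<int>\<^sub>\<le>\<^sub>0"
    "1 * w + of_nat k \<notin> \<int>\<^sub>\<le>\<^sub>0" "1 * w + 1 \<notin> \<int>\<^sub>\<le>\<^sub>0" "(-1) * w + 1 \<notin> \<int>\<^sub>\<le>\<^sub>0"
    by (rule affine_not_nonpos_Ints[OF w]; use k in simp)+
  have "(binomC_cofactor k has_field_derivative
          binomC_cofactor_logderiv k w * binomC_cofactor k w) (at w)"
    unfolding binomC_cofactor_def binomC_cofactor_logderiv_def
    by (rule derivative_eq_intros
             has_field_derivative_rGamma_no_nonpos_int[THEN DERIV_chain2]
             has_field_derivative_Gamma[THEN DERIV_chain2] refl args)+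
       (simp add: algebra_simps)
  then show ?thesis
    by (rule DERIV_imp_deriv)
qed

lemma higher_deriv_binomC_cofactor_logderiv_Polygamma:
  assumes k: "k \<ge> 1"
  shows "(deriv ^^ j) (binomC_cofactor_logderiv k) 0 =
           (-2) * (-2)^j * Polygamma j 1 + (-1)^j * Polygamma j (of_nat k + 1)
           + Polygamma j (of_nat k) - Polygamma j 1 + (-1)^j * Polygamma j 1"
proof -
  define \<psi> where "\<psi> u c = (\<lambda>w::complex. Digamma (u * w + c))" for u c
  have an: "\<psi> u c analytic_on {0}" if "norm u \<le> 2" "Re c \<ge> 1" for u c
  proof (rule analytic_on_subset)
    show "\<psi> u c analytic_on ball 0 (1/2)"
      unfolding \<psi>_def by (intro analytic_intros ballI affine_not_nonpos_Ints) (use that in auto)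
  qed simp
  have d: "(deriv ^^ j) (\<psi> u c) 0 = u ^ j * Polygamma j c" if "norm u \<le> 2" "Re c \<ge> 1" for u c
    unfolding \<psi>_def by (rule higher_deriv_Digamma_affine_0) (use that in auto)
  have an1: "\<psi> (-2) 1 analytic_on {0}" "\<psi> (-1) (of_nat k + 1) analytic_on {0}"
    "\<psi> 1 (of_nat k) analytic_on {0}" "\<psi> 1 1 analytic_on {0}" "\<psi> (-1) 1 analytic_on {0}"
    using k by (auto intro!: an)
  have "binomC_cofactor_logderiv k =
      (\<lambda>w. (-2) * \<psi> (-2) 1 w + \<psi> (-1) (of_nat k + 1) w + \<psi> 1 (of_nat k) w - \<psi> 1 1 w + \<psi> (-1) 1 w)"
    by (simp add: fun_eq_iff binomC_cofactor_logderiv_def \<psi>_def)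
  then have "(deriv ^^ j) (binomC_cofactor_logderiv k) 0 =
      (-2) * (deriv ^^ j) (\<psi> (-2) 1) 0 + (deriv ^^ j) (\<psi> (-1) (of_nat k + 1)) 0
      + (deriv ^^ j) (\<psi> 1 (of_nat k)) 0 - (deriv ^^ j) (\<psi> 1 1) 0 + (deriv ^^ j) (\<psi> (-1) 1) 0"
    by (simp add: higher_deriv_add_at higher_deriv_diff_at higher_deriv_cmult' an1 analytic_intros)
  also have "\<dots> = (-2) * (-2)^j * Polygamma j 1 + (-1)^j * Polygamma j (of_nat k + 1)
           + Polygamma j (of_nat k) - Polygamma j 1 + (-1)^j * Polygamma j 1"
    using k by (simp add: d)
  finally show ?thesis .
qed

lemma higher_deriv_binomC_cofactor_logderiv:
  assumes k: "k \<ge> 1"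
  shows "(deriv ^^ j) (binomC_cofactor_logderiv k) 0 = of_real (xibar k (Suc j))"
proof -
  define P1 where "P1 = Polygamma j (1::real)"
  define Pk where "Pk = Polygamma j (real k)"
  have "Polygamma j (of_nat k + 1 :: complex) = Polygamma j (of_nat k) + (-1)^j * fact j / of_nat k ^ Suc j"
    using k by (intro Polygamma_plus1) simp
  moreover have "Polygamma j (of_nat k :: complex) = of_real Pk" "Polygamma j (1 :: complex) = of_real P1"
    using Polygamma_of_real[of "real k" j] Polygamma_of_real[of 1 j] k by (simp_all add: Pk_def P1_def)
  ultimately have "(deriv ^^ j) (binomC_cofactor_logderiv k) 0 = of_real
      ((-2) * (-2)^j * P1 + (-1)^j * (Pk + (-1)^j * fact j / real k ^ Suc j) + Pk - P1 + (-1)^j * P1)"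
    by (simp add: higher_deriv_binomC_cofactor_logderiv_Polygamma[OF k])
  also have "(-2) * (-2)^j * P1 + (-1)^j * (Pk + (-1)^j * fact j / real k ^ Suc j) + Pk - P1
               + (-1)^j * P1 = xibar k (Suc j)"
    by (cases "even j") (simp_all add: xibar_def P1_def Pk_def)
  finally show ?thesis .
qed

lemma binomC_cofactor_0:
  assumes k: "k \<ge> 1"
  shows "binomC_cofactor k 0 = of_real ((-1)^(k-1) / real k)"
proof -
  obtain k' where k': "k = Suc k'"
    using k by (cases k) auto
  have "Gamma (of_nat k :: complex) = fact k'"
    using Gamma_fact[of k'] by (simp add: k' add.commute)
  moreover have "rGamma (of_nat k + 1 :: complex) = inverse (of_nat k * fact k')"
    using Gamma_fact[of k, where 'a=complex] by (simp add: rGamma_inverse_Gamma add.commute k')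
  moreover have "(fact k' :: complex) \<noteq> 0" "(of_nat k :: complex) \<noteq> 0"
    using k by simp_all
  ultimately show ?thesis
    unfolding binomC_cofactor_def by (simp add: field_simps)
qed

lemma higher_deriv_binomC_cofactor:
  assumes k: "k \<ge> 1"
  shows "(deriv ^^ n) (binomC_cofactor k) 0 =
           of_real ((-1)^(k-1) / real k * complete_bell n (xibar k))"
  using higher_deriv_eq_complete_bell[OF holomorphic_binomC_cofactor[OF k]
          holomorphic_binomC_cofactor_logderiv[OF k] open_ball, of 0 "xibar k" n]
  by (simp add: deriv_binomC_cofactor[OF k] higher_deriv_binomC_cofactor_logderiv[OF k]
                binomC_cofactor_0[OF k])

lemma higher_deriv_binomC_complex:
  assumes k: "k \<ge> 1" and p: "p \<ge> 1"
  shows "(deriv ^^ p) (binomC_complex k) 0 =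
           of_real ((-1)^(p+k) / real k * real p * complete_bell (p-1) (xibar k))"
proof -
  obtain n where p: "p = Suc n"
    using p by (cases p) auto
  have reflected: "(\<lambda>m. binomC_cofactor k (-m)) holomorphic_on ball 0 (1/2)"
    by (rule holomorphic_on_compose_gen[where f=uminus, unfolded o_def,
                                        OF _ holomorphic_binomC_cofactor[OF k]])
       (auto intro!: holomorphic_intros)
  have "(deriv ^^ p) (binomC_complex k) 0 = (deriv ^^ p) (\<lambda>m. m * binomC_cofactor k (-m)) 0"
    by (rule higher_deriv_transform_within_open[OF holomorphic_binomC_complex _ open_ball])
       (auto intro!: holomorphic_intros reflected binomC_complex_eq_times_cofactor[OF k])
  also have "\<dots> = of_nat p * (deriv ^^ n) (\<lambda>m. binomC_cofactor k (-1 * m)) 0"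
    unfolding p using higher_deriv_times_ident_0[OF reflected open_ball] by simp
  also have "\<dots> = of_nat p * (-1)^n * (deriv ^^ n) (binomC_cofactor k) 0"
    using higher_deriv_compose_linear[OF holomorphic_binomC_cofactor[OF k],
            where S="ball 0 (1/2)" and z=0 and u="-1" and n=n] by simp
  also have "\<dots> = of_real ((-1)^(p+k) / real k * real p * complete_bell (p-1) (xibar k))"
    using k by (simp add: higher_deriv_binomC_cofactor p power_add power_diff)
  finally show ?thesis .
qed

theorem theorem4:
  fixes k p :: nat
  assumes "k \<ge> 1" and "p \<ge> 1"
  shows "(deriv ^^ p) (binomC k) 0
           = (-1)^(p+k) / real k * real p * complete_bell (p-1) (xibar k)"
proof -
  have "(deriv ^^ p) (binomC k) 0 = Re ((deriv ^^ p) (binomC_complex k) (of_real 0))"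
    by (rule higher_deriv_real_eq_Re_higher_deriv[OF holomorphic_binomC_complex open_ball])
       (simp_all add: binomC_complex_of_real)
  then show ?thesis
    by (simp add: higher_deriv_binomC_complex[OF assms])
qed

end
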